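(* Let $d\ge1$ and $\alpha\in[0,1]$. Let $E=\{\pm e_i: i\in[d]\}\subseteq\mathbb R^d$ and let $D$ be the uniform distribution on $E$. For $v\in[-1,1]^d$ let $D_v$ be the distribution of $b\,e_i$, where $i$ is uniform in $[d]$ and then $b\in\{-1,1\}$ is drawn with $\mathbb E[b]=v_i$. Let $\mathcal D_\alpha=\{D_{\alpha v}: v\in\{-1,1\}^d\}$ and let $\mathcal B(\mathcal D_\alpha,D)$ be the decision problem: given access to an unknown distribution $D'\in\mathcal D_\alpha\cup\{D\}$, output $1$ if $D'\in\mathcal D_\alpha$ and $0$ if $D'=D$. Then for any $r>0$, any (randomized) statistical query algorithm that solves $\mathcal B(\mathcal D_\alpha,D)$ with success probability at least $2/3$ using the oracle $\mathrm{VSTAT}(d/(r\alpha^2))$ must make $2^{\Omega(r)}$ queries.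
   Context: $e_i$ is the $i$-th standard basis vector. For a distribution $D'$ over a domain $Z$ and $n>0$, the oracle $\mathrm{VSTAT}_{D'}(n)$, given any $\phi:Z\to[0,1]$, returns some $v$ with $|v-p_\phi|\le\max\{1/n,\sqrt{p_\phi(1-p_\phi)/n}\}$ where $p_\phi=\mathbb E_{D'}[\phi]$ (any such value may be returned); a statistical query algorithm accesses the input distribution only through such calls. The constant in $\Omega(\cdot)$ is absolute. *)

theory Defs
  imports "HOL-Probability.Probability"
begin

text \<open>Points of R^d are modelled as functions nat => real (only coordinates < d matter).\<close>

definition std_basis :: "nat \<Rightarrow> (nat \<Rightarrow> real)" where
  "std_basis i = (\<lambda>j. if j = i then 1 else 0)"

definition E_set :: "nat \<Rightarrow> (nat \<Rightarrow> real) set" where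
  "E_set d = {std_basis i | i. i < d} \<union> {- std_basis i | i. i < d}"

definition D_ref :: "nat \<Rightarrow> (nat \<Rightarrow> real) pmf" where
  "D_ref d = pmf_of_set (E_set d)"

text \<open>D_v: i uniform in [d], then b in {-1,1} with E[b] = v_i (i.e. P[b=1] = (1+v_i)/2); output b e_i.\<close>
definition D_vec :: "nat \<Rightarrow> (nat \<Rightarrow> real) \<Rightarrow> (nat \<Rightarrow> real) pmf" where
  "D_vec d v = do {
     i \<leftarrow> pmf_of_set {..<d};
     b \<leftarrow> bernoulli_pmf ((1 + v i) / 2);
     return_pmf (if b then std_basis i else - std_basis i) }"

definition D_family :: "nat \<Rightarrow> real \<Rightarrow> (nat \<Rightarrow> real) pmf set" where
  "D_family d \<alpha> = {D_vec d (\<lambda>i. \<alpha> * v i) | v. \<forall>i<d. v i \<in> {-1, 1}}"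

text \<open>Valid VSTAT_{P}(n) oracle (answers are any valid value; modelled as a function of the query).\<close>
definition vstat_valid ::
  "(nat \<Rightarrow> real) pmf \<Rightarrow> real \<Rightarrow> (((nat \<Rightarrow> real) \<Rightarrow> real) \<Rightarrow> real) \<Rightarrow> bool" where
  "vstat_valid P n orc \<longleftrightarrow>
     (\<forall>\<phi>. (\<forall>z. 0 \<le> \<phi> z \<and> \<phi> z \<le> 1) \<longrightarrow>
        (let p = measure_pmf.expectation P \<phi>
         in \<bar>orc \<phi> - p\<bar> \<le> max (1 / n) (sqrt (p * (1 - p) / n))))"

text \<open>A deterministic adaptive SQ algorithm: next query as a function of previous answers,
  and final output (True = 1, False = 0) as a function of all answers.\<close>
type_synonym sq_alg = "(real list \<Rightarrow> ((nat \<Rightarrow> real) \<Rightarrow> real)) \<times> (real list \<Rightarrow> bool)"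

fun sq_transcript :: "(real list \<Rightarrow> ((nat \<Rightarrow> real) \<Rightarrow> real)) \<Rightarrow>
    (((nat \<Rightarrow> real) \<Rightarrow> real) \<Rightarrow> real) \<Rightarrow> nat \<Rightarrow> real list" where
  "sq_transcript Q orc 0 = []"
| "sq_transcript Q orc (Suc k) =
     (let h = sq_transcript Q orc k in h @ [orc (Q h)])"

definition sq_run :: "sq_alg \<Rightarrow> nat \<Rightarrow> (((nat \<Rightarrow> real) \<Rightarrow> real) \<Rightarrow> real) \<Rightarrow> bool" where
  "sq_run A q orc = snd A (sq_transcript (fst A) orc q)"

text \<open>Randomized SQ algorithm = probability measure M over deterministic algorithms, each making
  q queries. It solves B(D_alpha, D) with VSTAT(n) with success prob >= 2/3.\<close>
definition solves_B ::
  "sq_alg measure \<Rightarrow> nat \<Rightarrow> nat \<Rightarrow> real \<Rightarrow> real \<Rightarrow> bool" where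
  "solves_B M q d \<alpha> n \<longleftrightarrow>
     (\<forall>P orc. P \<in> D_family d \<alpha> \<and> vstat_valid P n orc \<longrightarrow>
        {A \<in> space M. sq_run A q orc} \<in> sets M \<and>
        measure M {A \<in> space M. sq_run A q orc} \<ge> 2/3) \<and>
     (\<forall>orc. vstat_valid (D_ref d) n orc \<longrightarrow>
        {A \<in> space M. \<not> sq_run A q orc} \<in> sets M \<and>
        measure M {A \<in> space M. \<not> sq_run A q orc} \<ge> 2/3)"

end

theory Submission
  imports Defs
begin

text \<open>Adversary argument. Answer each query \<open>\<phi>\<close> by its mean under \<open>D\<close>, unless this is not a valid
  \<open>VSTAT(n)\<close> answer for \<open>D_{\<alpha> v}\<close>. Since
  \<open>E_{D_{\<alpha> v}} \<phi> - E_D \<phi> = \<alpha>/(2d) \<Sum>\<^sub>i v\<^sub>i (\<phi>(e\<^sub>i) - \<phi>(-e\<^sub>i))\<close> and \<open>n = d/(r \<alpha>\<^sup>2)\<close>, Hoeffding's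
  inequality shows that for a fixed query this happens for at most a \<open>2 e^{-r/4}\<close> fraction of the
  sign vectors \<open>v\<close>. An algorithm succeeding with probability \<open>2/3\<close> on both \<open>D\<close> and every
  \<open>D_{\<alpha> v}\<close> distinguishes the two answer sequences with probability \<open>1/3\<close> for each \<open>v\<close>, which
  requires one of its \<open>q\<close> queries to be bad for \<open>v\<close>; averaging over \<open>v\<close> gives
  \<open>q \<cdot> 2 e^{-r/4} \<ge> 1/3\<close>.\<close>

lemma std_basis_eq_iff [simp]: "std_basis i = std_basis j \<longleftrightarrow> i = j"
  unfolding std_basis_def by (metis zero_neq_one)

lemma uminus_std_basis_eq_iff [simp]: "- std_basis i = - std_basis j \<longleftrightarrow> i = j"
proof
  assume "- std_basis i = - std_basis j"
  from fun_cong[OF this, of i] show "i = j"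
    unfolding std_basis_def by (simp split: if_splits)
qed simp

lemma std_basis_neq_uminus [simp]: "std_basis i \<noteq> - std_basis j"
proof
  assume "std_basis i = - std_basis j"
  then have "std_basis i i = - std_basis j i" by simp
  then show False unfolding std_basis_def by (auto split: if_splits)
qed

lemma E_set_eq: "E_set d = std_basis ` {..<d} \<union> (\<lambda>i. - std_basis i) ` {..<d}"
  unfolding E_set_def by auto

lemma expectation_D_ref:
  fixes \<phi> :: "(nat \<Rightarrow> real) \<Rightarrow> real"
  assumes "d > 0"
  shows "measure_pmf.expectation (D_ref d) \<phi> =
    (\<Sum>i<d. \<phi> (std_basis i) + \<phi> (- std_basis i)) / (2 * real d)"
proof -
  have disj: "std_basis ` {..<d} \<inter> (\<lambda>i. - std_basis i) ` {..<d} = {}" by auto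
  have inj: "inj_on std_basis {..<d}" "inj_on (\<lambda>i. - std_basis i) {..<d}"
    by (auto intro: inj_onI)
  have "card (E_set d) = 2 * d"
    unfolding E_set_eq using card_Un_disjoint[OF _ _ disj] inj by (simp add: card_image)
  moreover have "sum \<phi> (E_set d) = (\<Sum>i<d. \<phi> (std_basis i) + \<phi> (- std_basis i))"
    unfolding E_set_eq
    by (simp add: sum.union_disjoint[OF _ _ disj] sum.reindex[OF inj(1)] sum.reindex[OF inj(2)]
        sum.distrib)
  moreover have "E_set d \<noteq> {}" "finite (E_set d)"
    using assms unfolding E_set_eq by auto
  ultimately show ?thesis
    unfolding D_ref_def by (simp add: integral_pmf_of_set)
qed

lemma expectation_D_vec:
  fixes \<phi> :: "(nat \<Rightarrow> real) \<Rightarrow> real"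
  assumes "d > 0" and w: "\<And>i. i < d \<Longrightarrow> \<bar>w i\<bar> \<le> 1"
  shows "measure_pmf.expectation (D_vec d w) \<phi> =
    (\<Sum>i<d. (1 + w i) / 2 * \<phi> (std_basis i) + (1 - w i) / 2 * \<phi> (- std_basis i)) / real d"
proof -
  have coin: "measure_pmf.expectation (bernoulli_pmf ((1 + w i) / 2) \<bind>
        (\<lambda>b. return_pmf (if b then std_basis i else - std_basis i))) \<phi>
      = (1 + w i) / 2 * \<phi> (std_basis i) + (1 - w i) / 2 * \<phi> (- std_basis i)" if "i < d" for i
  proof -
    have "0 \<le> (1 + w i) / 2" "(1 + w i) / 2 \<le> 1" using w[OF that] by auto
    then show ?thesis
      by (subst pmf_expectation_bind[of UNIV]) (auto simp: UNIV_bool field_simps)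
  qed
  show ?thesis
    unfolding D_vec_def using assms coin
    by (subst pmf_expectation_bind_pmf_of_set)
      (auto simp: sum_divide_distrib field_simps intro!: sum.cong)
qed

lemma expectation_D_vec_minus_D_ref:
  fixes \<phi> :: "(nat \<Rightarrow> real) \<Rightarrow> real"
  assumes "d > 0" and "\<And>i. i < d \<Longrightarrow> \<bar>w i\<bar> \<le> 1"
  shows "measure_pmf.expectation (D_vec d w) \<phi> - measure_pmf.expectation (D_ref d) \<phi> =
    (\<Sum>i<d. w i * (\<phi> (std_basis i) - \<phi> (- std_basis i))) / (2 * real d)"
proof -
  have "(\<Sum>i<d. (1 + w i) / 2 * \<phi> (std_basis i) + (1 - w i) / 2 * \<phi> (- std_basis i)) =
      (\<Sum>i<d. \<phi> (std_basis i) + \<phi> (- std_basis i)) / 2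
      + (\<Sum>i<d. w i * (\<phi> (std_basis i) - \<phi> (- std_basis i))) / 2"
    unfolding sum_divide_distrib sum.distrib[symmetric] by (intro sum.cong) (auto simp: field_simps)
  then show ?thesis
    using assms by (simp add: expectation_D_vec expectation_D_ref field_simps)
qed

lemma expectation_unit_interval:
  fixes \<phi> :: "'a \<Rightarrow> real"
  assumes "\<forall>z. 0 \<le> \<phi> z \<and> \<phi> z \<le> 1"
  shows "0 \<le> measure_pmf.expectation P \<phi> \<and> measure_pmf.expectation P \<phi> \<le> 1"
proof -
  have "integrable (measure_pmf P) \<phi>"
    using assms by (intro measure_pmf.integrable_const_bound[where B=1]) auto
  then show ?thesis
    using assms by (auto intro!: integral_nonneg measure_pmf.integral_le_const)
qed

lemma cosh_le_exp_half_square: "cosh (x::real) \<le> exp (x\<^sup>2 / 2)"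
proof -
  define h where "h = 2 * \<bar>x\<bar>"
  have "-h * (1/2) + ln (1 + (1/2) * (exp h - 1)) \<le> h\<^sup>2 / 8"
    using Hoeffdings_lemma_aux[of h "1/2"] unfolding h_def by simp
  then have "ln ((1 + exp h) / 2) \<le> h / 2 + h\<^sup>2 / 8"
    by (simp add: field_simps)
  then have "(1 + exp h) / 2 \<le> exp (h / 2 + h\<^sup>2 / 8)"
    by (smt (verit) exp_gt_zero exp_le_cancel_iff exp_ln)
  also have "h / 2 + h\<^sup>2 / 8 = \<bar>x\<bar> + x\<^sup>2 / 2"
    unfolding h_def by (simp add: power2_eq_square)
  finally have "(1 + exp (2 * \<bar>x\<bar>)) / 2 \<le> exp \<bar>x\<bar> * exp (x\<^sup>2 / 2)"
    unfolding h_def by (simp add: exp_add)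
  then have "exp (- \<bar>x\<bar>) * (1 + exp (2 * \<bar>x\<bar>)) / 2 \<le> exp (x\<^sup>2 / 2)"
    by (simp add: exp_minus field_simps)
  moreover have "exp (- \<bar>x\<bar>) * (1 + exp (2 * \<bar>x\<bar>)) = exp x + exp (- x)"
    by (cases "x \<ge> 0") (simp_all add: algebra_simps flip: exp_add)
  ultimately show ?thesis
    by (simp add: cosh_def)
qed

lemma sum_sign_vectors_exp:
  fixes a :: "'i \<Rightarrow> real"
  assumes "finite I"
  shows "(\<Sum>v\<in>PiE I (\<lambda>_. {-1, 1}). exp (\<Sum>i\<in>I. v i * a i)) = (\<Prod>i\<in>I. 2 * cosh (a i))"
proof -
  have "(\<Prod>i\<in>I. 2 * cosh (a i)) = (\<Prod>i\<in>I. \<Sum>s\<in>{-1::real, 1}. exp (s * a i))"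
    by (simp add: cosh_def add_divide_distrib add.commute)
  also have "\<dots> = (\<Sum>v\<in>PiE I (\<lambda>_. {-1, 1}). \<Prod>i\<in>I. exp (v i * a i))"
    by (rule prod_sum_PiE) (use assms in auto)
  also have "\<dots> = (\<Sum>v\<in>PiE I (\<lambda>_. {-1, 1}). exp (\<Sum>i\<in>I. v i * a i))"
    by (simp add: exp_sum[OF assms])
  finally show ?thesis ..
qed

text \<open>Hoeffding's inequality for Rademacher sums in counting form, by Chernoff's exponential moment
  method.\<close>

lemma card_sign_vectors_tail:
  fixes a :: "'i \<Rightarrow> real"
  assumes fin: "finite I" and pos: "(\<Sum>i\<in>I. (a i)\<^sup>2) > 0" and "t \<ge> 0"
  shows "real (card {v\<in>PiE I (\<lambda>_. {-1, 1}). t < (\<Sum>i\<in>I. v i * a i)})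
    \<le> 2 ^ card I * exp (- t\<^sup>2 / (2 * (\<Sum>i\<in>I. (a i)\<^sup>2)))"
proof -
  define \<sigma>2 where "\<sigma>2 = (\<Sum>i\<in>I. (a i)\<^sup>2)"
  define V where "V = PiE I (\<lambda>_. {-1::real, 1})"
  define l where "l = t / \<sigma>2"
  have "l \<ge> 0" using pos \<open>t \<ge> 0\<close> unfolding l_def \<sigma>2_def by simp
  have "real (card {v\<in>V. t < (\<Sum>i\<in>I. v i * a i)}) * exp (l * t)
      = (\<Sum>v\<in>{v\<in>V. t < (\<Sum>i\<in>I. v i * a i)}. exp (l * t))"
    by simp
  also have "\<dots> \<le> (\<Sum>v\<in>{v\<in>V. t < (\<Sum>i\<in>I. v i * a i)}. exp (\<Sum>i\<in>I. v i * (l * a i)))"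
    using \<open>l \<ge> 0\<close>
    by (intro sum_mono) (auto intro!: mult_left_mono simp: sum_distrib_left[symmetric] ac_simps)
  also have "\<dots> \<le> (\<Sum>v\<in>V. exp (\<Sum>i\<in>I. v i * (l * a i)))"
    using fin by (intro sum_mono2) (auto simp: V_def finite_PiE)
  also have "\<dots> = (\<Prod>i\<in>I. 2 * cosh (l * a i))"
    unfolding V_def by (rule sum_sign_vectors_exp[OF fin])
  also have "\<dots> \<le> (\<Prod>i\<in>I. 2 * exp ((l * a i)\<^sup>2 / 2))"
    by (intro prod_mono) (simp add: cosh_le_exp_half_square)
  also have "\<dots> = 2 ^ card I * exp (l\<^sup>2 * \<sigma>2 / 2)"
    by (simp add: prod.distrib exp_sum[OF fin, symmetric] \<sigma>2_def power_mult_distrib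
        sum_distrib_left sum_divide_distrib)
  finally have "real (card {v\<in>V. t < (\<Sum>i\<in>I. v i * a i)})
      \<le> 2 ^ card I * exp (l\<^sup>2 * \<sigma>2 / 2) / exp (l * t)"
    by (simp add: field_simps)
  also have "\<dots> = 2 ^ card I * exp (l\<^sup>2 * \<sigma>2 / 2 - l * t)"
    by (simp add: exp_diff)
  also have "l\<^sup>2 * \<sigma>2 / 2 - l * t = - t\<^sup>2 / (2 * \<sigma>2)"
    unfolding l_def using pos by (simp add: \<sigma>2_def field_simps power2_eq_square)
  finally show ?thesis unfolding V_def \<sigma>2_def .
qed

lemma card_sign_vectors_abs_tail:
  fixes a :: "'i \<Rightarrow> real"
  assumes fin: "finite I" and "t \<ge> 0" and var: "2 * u * (\<Sum>i\<in>I. (a i)\<^sup>2) \<le> t\<^sup>2"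
  shows "real (card {v\<in>PiE I (\<lambda>_. {-1, 1}). t < \<bar>\<Sum>i\<in>I. v i * a i\<bar>}) \<le> 2 * 2 ^ card I * exp (- u)"
proof (cases "(\<Sum>i\<in>I. (a i)\<^sup>2) = 0")
  case True
  then have "\<forall>i\<in>I. a i = 0" using fin by (simp add: sum_nonneg_eq_0_iff)
  then have "{v\<in>PiE I (\<lambda>_. {-1, 1}). t < \<bar>\<Sum>i\<in>I. v i * a i\<bar>} = {}"
    using \<open>t \<ge> 0\<close> by auto
  then show ?thesis by (simp only: card.empty) simp
next
  case False
  define \<sigma>2 where "\<sigma>2 = (\<Sum>i\<in>I. (a i)\<^sup>2)"
  define V where "V = PiE I (\<lambda>_. {-1::real, 1})"
  define tail where "tail = (\<lambda>b. {v\<in>V. t < (\<Sum>i\<in>I. v i * b i)})"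
  have pos: "\<sigma>2 > 0"
    using False unfolding \<sigma>2_def by (simp add: order_le_neq_trans sum_nonneg)
  have "- t\<^sup>2 / (2 * \<sigma>2) \<le> - u"
    using var pos unfolding \<sigma>2_def by (simp add: field_simps)
  then have tail_bound: "real (card (tail b)) \<le> 2 ^ card I * exp (- u)"
    if "(\<Sum>i\<in>I. (b i)\<^sup>2) = \<sigma>2" for b
    using card_sign_vectors_tail[OF fin _ \<open>t \<ge> 0\<close>, of b] that pos
    unfolding tail_def V_def by (smt (verit) exp_le_cancel_iff mult_left_mono zero_le_power)
  have "{v\<in>V. t < \<bar>\<Sum>i\<in>I. v i * a i\<bar>} \<subseteq> tail a \<union> tail (\<lambda>i. - a i)"
    unfolding tail_def by (auto simp: sum_negf)
  moreover have "finite (tail a \<union> tail (\<lambda>i. - a i))"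
    using fin unfolding tail_def V_def by (simp add: finite_PiE)
  ultimately have "card {v\<in>V. t < \<bar>\<Sum>i\<in>I. v i * a i\<bar>} \<le> card (tail a) + card (tail (\<lambda>i. - a i))"
    by (meson card_Un_le card_mono order_trans)
  then have "real (card {v\<in>V. t < \<bar>\<Sum>i\<in>I. v i * a i\<bar>})
      \<le> real (card (tail a)) + real (card (tail (\<lambda>i. - a i)))"
    by linarith
  also have "\<dots> \<le> 2 * 2 ^ card I * exp (- u)"
    using tail_bound[of a] tail_bound[of "\<lambda>i. - a i"] by (simp add: \<sigma>2_def)
  finally show ?thesis unfolding V_def .
qed

definition vstat_tolerance :: "real \<Rightarrow> real \<Rightarrow> real" where
  "vstat_tolerance n p = max (1 / n) (sqrt (p * (1 - p) / n))"

lemma vstat_valid_iff: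
  "vstat_valid P n orc \<longleftrightarrow> (\<forall>\<phi>. (\<forall>z. 0 \<le> \<phi> z \<and> \<phi> z \<le> 1) \<longrightarrow>
     \<bar>orc \<phi> - measure_pmf.expectation P \<phi>\<bar> \<le> vstat_tolerance n (measure_pmf.expectation P \<phi>))"
  by (simp add: vstat_valid_def vstat_tolerance_def Let_def)

lemma vstat_tolerance_nonneg: "n \<ge> 0 \<Longrightarrow> vstat_tolerance n p \<ge> 0"
  by (simp add: vstat_tolerance_def le_max_iff_disj)

lemma vstat_valid_expectation: "n \<ge> 0 \<Longrightarrow> vstat_valid P n (measure_pmf.expectation P)"
  by (simp add: vstat_valid_iff vstat_tolerance_nonneg)

lemma vstat_valid_patch:
  assumes "n \<ge> 0"
  shows "vstat_valid P n (\<lambda>\<phi>. if (\<forall>z. 0 \<le> \<phi> z \<and> \<phi> z \<le> 1) \<and>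
      \<not> \<bar>orc \<phi> - measure_pmf.expectation P \<phi>\<bar> \<le> vstat_tolerance n (measure_pmf.expectation P \<phi>)
    then measure_pmf.expectation P \<phi> else orc \<phi>)"
  using assms by (simp add: vstat_valid_iff vstat_tolerance_nonneg)

lemma variance_ge_if_close:
  fixes p p' :: real
  assumes "0 \<le> p" "p \<le> 1" "0 \<le> p'" "p' \<le> 1" and close: "4 * \<bar>p' - p\<bar> \<le> min p (1 - p)"
  shows "min p (1 - p) / 4 \<le> p' * (1 - p')"
proof -
  define m where "m = min p (1 - p)"
  have "m / 2 \<le> min p' (1 - p')"
    using close unfolding m_def by (auto simp: min_def abs_if split: if_splits)
  show ?thesis
  proof (cases "p' \<le> 1 / 2")
    case True
    then have "(m / 2) * (1 / 2) \<le> p' * (1 - p')"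
      using \<open>m / 2 \<le> min p' (1 - p')\<close> assms by (intro mult_mono) (auto simp: m_def)
    then show ?thesis by (simp add: m_def)
  next
    case False
    then have "(1 / 2) * (m / 2) \<le> p' * (1 - p')"
      using \<open>m / 2 \<le> min p' (1 - p')\<close> assms by (intro mult_mono) (auto simp: m_def)
    then show ?thesis by (simp add: m_def)
  qed
qed

text \<open>Outside the \<open>1/n\<close> regime the hypothesis forces \<open>4 \<bar>p' - p\<bar> < min p (1 - p)\<close>, hence
  \<open>p' (1 - p') \<ge> min p (1 - p) / 4\<close>, and the tolerance around \<open>p'\<close> covers \<open>p\<close>.\<close>

lemma vstat_tolerance_transfer:
  fixes n p p' :: real
  assumes n: "n > 0" and p: "0 \<le> p" "p \<le> 1" and p': "0 \<le> p'" "p' \<le> 1"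
    and close: "\<bar>p' - p\<bar> \<le> max (1 / n) (sqrt (min p (1 - p) / (4 * n)))"
  shows "\<bar>p - p'\<bar> \<le> vstat_tolerance n p'"
proof (cases "\<bar>p' - p\<bar> \<le> 1 / n")
  case True
  then show ?thesis by (simp add: vstat_tolerance_def abs_minus_commute)
next
  case False
  define m where "m = min p (1 - p)"
  define x where "x = \<bar>p' - p\<bar>"
  have "m \<ge> 0" "x \<ge> 0" using p unfolding m_def x_def by auto
  have "x \<le> sqrt (m / (4 * n))" "1 / n < x"
    using close False unfolding x_def m_def by auto
  then have xsq: "x\<^sup>2 \<le> m / (4 * n)" and "(1 / n)\<^sup>2 < x\<^sup>2"
    using \<open>x \<ge> 0\<close> n by (auto intro: sqrt_ge_absD power_strict_mono)
  have "1 < n\<^sup>2 * x\<^sup>2"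
    using \<open>(1 / n)\<^sup>2 < x\<^sup>2\<close> n by (simp add: field_simps)
  moreover have "n\<^sup>2 * x\<^sup>2 \<le> m * n / 4"
    using mult_left_mono[OF xsq, of "n\<^sup>2"] n by (simp add: field_simps power2_eq_square)
  ultimately have "4 < m * n"
    by simp
  then have "m > 0"
    using n \<open>m \<ge> 0\<close> by (cases "m = 0") auto
  have "x\<^sup>2 * 16 \<le> 4 * m / n"
    using xsq n by (simp add: field_simps)
  also have "\<dots> < m\<^sup>2"
    using \<open>4 < m * n\<close> \<open>m > 0\<close> n by (simp add: field_simps power2_eq_square)
  finally have "x\<^sup>2 * 16 < m\<^sup>2" .
  then have "(4 * x)\<^sup>2 < m\<^sup>2"
    by (simp add: power_mult_distrib)
  then have "4 * x < m"
    using \<open>m \<ge> 0\<close> by (rule power_less_imp_less_base)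
  then have "m / 4 \<le> p' * (1 - p')"
    using variance_ge_if_close[OF p p'] by (simp add: m_def x_def)
  then have "x\<^sup>2 \<le> p' * (1 - p') / n"
    using xsq n by (simp add: field_simps)
  then have "x \<le> sqrt (p' * (1 - p') / n)"
    using \<open>x \<ge> 0\<close> by (simp add: real_le_rsqrt)
  then show ?thesis
    unfolding x_def vstat_tolerance_def by (simp add: abs_minus_commute)
qed

lemma sum_square_diff_std_basis_le:
  fixes \<phi> :: "(nat \<Rightarrow> real) \<Rightarrow> real"
  assumes "d > 0" and \<phi>: "\<forall>z. 0 \<le> \<phi> z \<and> \<phi> z \<le> 1"
  defines "p \<equiv> measure_pmf.expectation (D_ref d) \<phi>"
  shows "(\<Sum>i<d. (\<phi> (std_basis i) - \<phi> (- std_basis i))\<^sup>2) \<le> 2 * real d * min p (1 - p)"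
proof -
  have sq: "(x - y)\<^sup>2 \<le> x + y \<and> (x - y)\<^sup>2 \<le> 2 - x - y"
    if "0 \<le> x" "x \<le> 1" "0 \<le> y" "y \<le> 1" for x y :: real
  proof -
    have "(x - y)\<^sup>2 = \<bar>x - y\<bar> * \<bar>x - y\<bar>"
      by (simp add: power2_eq_square)
    also have "\<dots> \<le> \<bar>x - y\<bar> * 1"
      using that by (intro mult_left_mono) auto
    finally show ?thesis
      using that by (simp add: abs_if split: if_splits)
  qed
  have total: "(\<Sum>i<d. \<phi> (std_basis i) + \<phi> (- std_basis i)) = 2 * real d * p"
    using \<open>d > 0\<close> unfolding p_def by (simp add: expectation_D_ref)
  have "(\<Sum>i<d. (\<phi> (std_basis i) - \<phi> (- std_basis i))\<^sup>2)
      \<le> (\<Sum>i<d. \<phi> (std_basis i) + \<phi> (- std_basis i))"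
    by (intro sum_mono conjunct1[OF sq]) (simp_all add: \<phi>)
  moreover have "(\<Sum>i<d. (\<phi> (std_basis i) - \<phi> (- std_basis i))\<^sup>2)
      \<le> (\<Sum>i<d. 2 - \<phi> (std_basis i) - \<phi> (- std_basis i))"
    by (intro sum_mono conjunct2[OF sq]) (simp_all add: \<phi>)
  moreover have "(\<Sum>i<d. 2 - \<phi> (std_basis i) - \<phi> (- std_basis i))
      = 2 * real d - (\<Sum>i<d. \<phi> (std_basis i) + \<phi> (- std_basis i))"
    by (simp add: sum_subtractf sum.distrib)
  ultimately show ?thesis
    using total by (simp add: algebra_simps min_def)
qed

lemma expectation_D_vec_sign_minus_D_ref:
  fixes \<phi> :: "(nat \<Rightarrow> real) \<Rightarrow> real"
  assumes "d > 0" "0 \<le> \<alpha>" "\<alpha> \<le> 1" and v: "v \<in> PiE {..<d} (\<lambda>_. {-1, 1})"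
  shows "measure_pmf.expectation (D_vec d (\<lambda>i. \<alpha> * v i)) \<phi> - measure_pmf.expectation (D_ref d) \<phi> =
    \<alpha> / (2 * real d) * (\<Sum>i<d. v i * (\<phi> (std_basis i) - \<phi> (- std_basis i)))"
proof -
  have "\<bar>\<alpha> * v i\<bar> \<le> 1" if "i < d" for i
  proof -
    have "v i \<in> {-1, 1}"
      using PiE_mem[OF v] that by simp
    then have "\<bar>v i\<bar> = 1"
      by auto
    then show ?thesis
      using \<open>0 \<le> \<alpha>\<close> \<open>\<alpha> \<le> 1\<close> by (simp add: abs_mult)
  qed
  then have "measure_pmf.expectation (D_vec d (\<lambda>i. \<alpha> * v i)) \<phi> - measure_pmf.expectation (D_ref d) \<phi>
      = (\<Sum>i<d. \<alpha> * v i * (\<phi> (std_basis i) - \<phi> (- std_basis i))) / (2 * real d)"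
    using expectation_D_vec_minus_D_ref[OF \<open>d > 0\<close>, of "\<lambda>i. \<alpha> * v i" \<phi>] by simp
  also have "\<dots> = \<alpha> / (2 * real d) * (\<Sum>i<d. v i * (\<phi> (std_basis i) - \<phi> (- std_basis i)))"
    by (simp add: sum_distrib_left sum_divide_distrib mult.assoc)
  finally show ?thesis .
qed

lemma large_sign_sum_if_vstat_invalid:
  fixes \<phi> :: "(nat \<Rightarrow> real) \<Rightarrow> real"
  assumes "d > 0" "0 < \<alpha>" "\<alpha> \<le> 1" "n > 0" and \<phi>: "\<forall>z. 0 \<le> \<phi> z \<and> \<phi> z \<le> 1"
    and v: "v \<in> PiE {..<d} (\<lambda>_. {-1, 1})"
  defines "p \<equiv> measure_pmf.expectation (D_ref d) \<phi>"
    and "p' \<equiv> measure_pmf.expectation (D_vec d (\<lambda>i. \<alpha> * v i)) \<phi>"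
  assumes invalid: "\<not> \<bar>p - p'\<bar> \<le> vstat_tolerance n p'"
  shows "2 * real d * max (1 / n) (sqrt (min p (1 - p) / (4 * n))) / \<alpha>
    < \<bar>\<Sum>i<d. v i * (\<phi> (std_basis i) - \<phi> (- std_basis i))\<bar>" (is "?t < \<bar>?S\<bar>")
proof (rule ccontr)
  assume "\<not> ?t < \<bar>?S\<bar>"
  then have "\<alpha> / (2 * real d) * \<bar>?S\<bar> \<le> \<alpha> / (2 * real d) * ?t"
    using \<open>\<alpha> > 0\<close> by (intro mult_left_mono) auto
  then have "\<bar>p' - p\<bar> \<le> max (1 / n) (sqrt (min p (1 - p) / (4 * n)))"
    using expectation_D_vec_sign_minus_D_ref[OF \<open>d > 0\<close> _ \<open>\<alpha> \<le> 1\<close> v, of \<phi>] \<open>\<alpha> > 0\<close> \<open>d > 0\<close>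
    by (simp add: p_def p'_def abs_mult)
  then show False
    using vstat_tolerance_transfer[OF \<open>n > 0\<close>] expectation_unit_interval[OF \<phi>] invalid
    by (simp add: p_def p'_def)
qed

text \<open>For a single query, the mean under \<open>D\<close> is an inadmissible answer for \<open>D_{\<alpha> v}\<close> only when the
  Rademacher sum \<open>\<Sum> v\<^sub>i (\<phi>(e\<^sub>i) - \<phi>(-e\<^sub>i))\<close> exceeds \<open>\<sqrt>(r/2)\<close> times its standard deviation.\<close>

lemma card_vstat_invalid:
  fixes \<phi> :: "(nat \<Rightarrow> real) \<Rightarrow> real"
  assumes "d > 0" "0 \<le> \<alpha>" "\<alpha> \<le> 1" "r > 0" and \<phi>: "\<forall>z. 0 \<le> \<phi> z \<and> \<phi> z \<le> 1"
  defines "p \<equiv> measure_pmf.expectation (D_ref d) \<phi>"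
    and "Ev \<equiv> \<lambda>v. measure_pmf.expectation (D_vec d (\<lambda>i. \<alpha> * v i)) \<phi>"
  shows "real (card {v\<in>PiE {..<d} (\<lambda>_. {-1, 1}).
      \<not> \<bar>p - Ev v\<bar> \<le> vstat_tolerance (real d / (r * \<alpha>\<^sup>2)) (Ev v)}) \<le> 2 * 2 ^ d * exp (- r / 4)"
proof -
  define V where "V = PiE {..<d} (\<lambda>_. {-1::real, 1})"
  define n where "n = real d / (r * \<alpha>\<^sup>2)"
  define a where "a = (\<lambda>i. \<phi> (std_basis i) - \<phi> (- std_basis i))"
  show ?thesis
  proof (cases "\<alpha> = 0")
    case True
    \<comment> \<open>then \<open>n = 0\<close> by division by zero, but the two means coincide\<close>
    then have "\<bar>p - Ev v\<bar> \<le> vstat_tolerance n (Ev v)" if "v \<in> V" for v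
      using expectation_D_vec_sign_minus_D_ref[OF \<open>d > 0\<close> \<open>0 \<le> \<alpha>\<close> \<open>\<alpha> \<le> 1\<close>, of v \<phi>] that
      by (simp add: V_def Ev_def p_def n_def vstat_tolerance_nonneg)
    then have "{v\<in>V. \<not> \<bar>p - Ev v\<bar> \<le> vstat_tolerance n (Ev v)} = {}"
      by blast
    then show ?thesis
      unfolding V_def n_def by (simp only: card.empty) simp
  next
    case False
    then have "\<alpha> > 0" "n > 0"
      using assms by (simp_all add: n_def)
    define m where "m = min p (1 - p)"
    define t where "t = 2 * real d * max (1 / n) (sqrt (m / (4 * n))) / \<alpha>"
    have "m \<ge> 0"
      using expectation_unit_interval[OF \<phi>] by (simp add: m_def p_def)
    have "t \<ge> 0"
      using \<open>\<alpha> > 0\<close> \<open>n > 0\<close> by (simp add: t_def le_max_iff_disj)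
    have "{v\<in>V. \<not> \<bar>p - Ev v\<bar> \<le> vstat_tolerance n (Ev v)} \<subseteq> {v\<in>V. t < \<bar>\<Sum>i<d. v i * a i\<bar>}"
      using large_sign_sum_if_vstat_invalid[OF \<open>d > 0\<close> \<open>\<alpha> > 0\<close> \<open>\<alpha> \<le> 1\<close> \<open>n > 0\<close> \<phi>]
      by (auto simp: V_def t_def m_def a_def p_def Ev_def)
    then have "real (card {v\<in>V. \<not> \<bar>p - Ev v\<bar> \<le> vstat_tolerance n (Ev v)})
        \<le> real (card {v\<in>V. t < \<bar>\<Sum>i<d. v i * a i\<bar>})"
      by (intro of_nat_mono card_mono) (simp_all add: V_def finite_PiE)
    also have "\<dots> \<le> 2 * 2 ^ d * exp (- r / 4)"
    proof -
      have "m / (4 * n) = (sqrt (m / (4 * n)))\<^sup>2"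
        using \<open>m \<ge> 0\<close> \<open>n > 0\<close> by simp
      also have "\<dots> \<le> (max (1 / n) (sqrt (m / (4 * n))))\<^sup>2"
        using \<open>m \<ge> 0\<close> \<open>n > 0\<close> by (intro power_mono) simp_all
      finally have variance: "real d * m * r \<le> t\<^sup>2"
        using \<open>\<alpha> > 0\<close> \<open>r > 0\<close> \<open>d > 0\<close>
        by (simp add: t_def n_def power_divide power_mult_distrib field_simps power2_eq_square)
      have "(\<Sum>i<d. (a i)\<^sup>2) \<le> 2 * real d * m"
        unfolding a_def m_def p_def by (rule sum_square_diff_std_basis_le[OF \<open>d > 0\<close> \<phi>])
      then have "2 * (r / 4) * (\<Sum>i<d. (a i)\<^sup>2) \<le> 2 * (r / 4) * (2 * real d * m)"
        using \<open>r > 0\<close> by (intro mult_left_mono) auto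
      also have "\<dots> \<le> t\<^sup>2"
        using variance by (simp add: ac_simps)
      finally show ?thesis
        using card_sign_vectors_abs_tail[OF _ \<open>t \<ge> 0\<close>, of "{..<d}" "r / 4" a]
        by (simp add: V_def)
    qed
    finally show ?thesis
      unfolding V_def n_def .
  qed
qed

lemma (in prob_space) prob_Int_ge: "A \<in> events \<Longrightarrow> B \<in> events \<Longrightarrow> prob A + prob B - 1 \<le> prob (A \<inter> B)"
  using measure_Un3[of A M B] prob_le_1[of "A \<union> B"] by (simp add: fmeasurable_eq_sets)

lemma (in prob_space) sum_prob_le_overlap:
  assumes "finite V" and events: "\<And>v. v \<in> V \<Longrightarrow> T v \<in> events"
    and overlap: "\<And>x. x \<in> space M \<Longrightarrow> real (card {v\<in>V. x \<in> T v}) \<le> K"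
  shows "(\<Sum>v\<in>V. prob (T v)) \<le> K"
proof -
  have integrable: "integrable M (indicator (T v) :: _ \<Rightarrow> real)" if "v \<in> V" for v
    using events[OF that] by (intro integrable_real_indicator) (simp_all add: less_top[symmetric])
  have "(\<Sum>v\<in>V. prob (T v)) = expectation (\<lambda>x. \<Sum>v\<in>V. indicator (T v) x)"
    using events integrable
    by (simp add: Bochner_Integration.integral_sum Int_absorb2 sets.sets_into_space)
  also have "\<dots> \<le> K"
  proof (rule integral_le_const)
    show "integrable M (\<lambda>x. \<Sum>v\<in>V. indicator (T v) x :: real)"
      using integrable by (rule Bochner_Integration.integrable_sum)
    have "(\<Sum>v\<in>V. indicator (T v) x :: real) = real (card {v\<in>V. x \<in> T v})" for x
      using \<open>finite V\<close> by (simp add: indicator_def Int_def)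
    then show "AE x in M. (\<Sum>v\<in>V. indicator (T v) x :: real) \<le> K"
      using overlap by (simp add: AE_I2)
  qed
  finally show ?thesis .
qed

lemma sq_transcript_cong:
  assumes "\<And>k. k < m \<Longrightarrow> orc (Q (sq_transcript Q orc' k)) = orc' (Q (sq_transcript Q orc' k))"
  shows "sq_transcript Q orc m = sq_transcript Q orc' m"
  using assms by (induction m) (simp_all add: Let_def)

text \<open>An algorithm can tell \<open>orc v\<close> from \<open>orc\<^sub>0\<close> only if one of the \<open>q\<close> queries it asks \<open>orc\<^sub>0\<close>
  lies in \<open>Bad v\<close>; double counting over the indices \<open>v\<close> then bounds the total success probability.\<close>

lemma sq_distinguishing_count:
  fixes M :: "sq_alg measure" and orc :: "'v \<Rightarrow> ((nat \<Rightarrow> real) \<Rightarrow> real) \<Rightarrow> real"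
    and b \<epsilon> :: real
  assumes "prob_space M" "finite V"
    and agree: "\<And>v \<phi>. v \<in> V \<Longrightarrow> \<phi> \<notin> Bad v \<Longrightarrow> orc v \<phi> = orc\<^sub>0 \<phi>"
    and few: "\<And>\<phi>. real (card {v\<in>V. \<phi> \<in> Bad v}) \<le> b"
    and T: "\<And>v. v \<in> V \<Longrightarrow> T v \<in> sets M \<and> \<epsilon> \<le> measure M (T v)"
    and distinguishes: "\<And>v A. v \<in> V \<Longrightarrow> A \<in> T v \<Longrightarrow> sq_run A q (orc v) \<noteq> sq_run A q orc\<^sub>0"
  shows "\<epsilon> * card V \<le> q * b"
proof -
  interpret prob_space M by fact
  define query where "query A k = fst A (sq_transcript (fst A) orc\<^sub>0 k)" for A :: sq_alg and k
  have overlap: "real (card {v\<in>V. A \<in> T v}) \<le> q * b" for A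
  proof -
    have "{v\<in>V. A \<in> T v} \<subseteq> (\<Union>k<q. {v\<in>V. query A k \<in> Bad v})"
    proof (intro subsetI; rule ccontr)
      fix v assume v: "v \<in> {v\<in>V. A \<in> T v}" and "v \<notin> (\<Union>k<q. {v\<in>V. query A k \<in> Bad v})"
      then have "sq_transcript (fst A) (orc v) q = sq_transcript (fst A) orc\<^sub>0 q"
        by (intro sq_transcript_cong) (auto simp: query_def agree)
      then show False
        using distinguishes[of v A] v by (simp add: sq_run_def)
    qed
    then have "card {v\<in>V. A \<in> T v} \<le> card (\<Union>k<q. {v\<in>V. query A k \<in> Bad v})"
      using \<open>finite V\<close> by (intro card_mono) auto
    also have "\<dots> \<le> (\<Sum>k<q. card {v\<in>V. query A k \<in> Bad v})"
      by (rule card_UN_le) simp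
    finally have "real (card {v\<in>V. A \<in> T v}) \<le> (\<Sum>k<q. real (card {v\<in>V. query A k \<in> Bad v}))"
      unfolding of_nat_sum[symmetric] by (rule of_nat_mono)
    also have "\<dots> \<le> (\<Sum>k<q. b)"
      by (intro sum_mono few)
    finally show ?thesis
      by simp
  qed
  have "\<epsilon> * card V = (\<Sum>v\<in>V. \<epsilon>)"
    by simp
  also have "\<dots> \<le> (\<Sum>v\<in>V. prob (T v))"
    using T by (intro sum_mono) auto
  also have "\<dots> \<le> q * b"
    using T overlap by (intro sum_prob_le_overlap \<open>finite V\<close>) auto
  finally show ?thesis .
qed

lemma solves_B_distinguishing_event:
  assumes "prob_space M" and solves: "solves_B M q d \<alpha> n"
    and "P \<in> D_family d \<alpha>" "vstat_valid P n orc" "vstat_valid (D_ref d) n orc\<^sub>0"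
  defines "T \<equiv> {A \<in> space M. sq_run A q orc} \<inter> {A \<in> space M. \<not> sq_run A q orc\<^sub>0}"
  shows "T \<in> sets M \<and> 1 / 3 \<le> measure M T"
proof -
  interpret prob_space M by fact
  have X: "{A \<in> space M. sq_run A q orc} \<in> events" "2 / 3 \<le> prob {A \<in> space M. sq_run A q orc}"
    and Y: "{A \<in> space M. \<not> sq_run A q orc\<^sub>0} \<in> events" "2 / 3 \<le> prob {A \<in> space M. \<not> sq_run A q orc\<^sub>0}"
    using assms unfolding solves_B_def by blast+
  have "T \<in> events"
    unfolding T_def using X(1) Y(1) by (rule sets.Int)
  moreover have "1 / 3 \<le> prob T"
    unfolding T_def using prob_Int_ge[OF X(1) Y(1)] X(2) Y(2) by linarith
  ultimately show ?thesis ..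
qed

text \<open>The adversary's oracle for \<open>D_{\<alpha> v}\<close> returns the mean under \<open>D\<close> whenever this is admissible.\<close>

lemma solves_B_query_lower_bound:
  assumes "prob_space M" and solves: "solves_B M q d \<alpha> (real d / (r * \<alpha>\<^sup>2))"
    and "d > 0" "0 \<le> \<alpha>" "\<alpha> \<le> 1" "r > 0"
  shows "exp (r / 4) / 6 \<le> real q"
proof -
  define n where "n = real d / (r * \<alpha>\<^sup>2)"
  define V where "V = PiE {..<d} (\<lambda>_. {-1::real, 1})"
  define P where "P v = D_vec d (\<lambda>i. \<alpha> * v i)" for v
  define orc\<^sub>0 :: "((nat \<Rightarrow> real) \<Rightarrow> real) \<Rightarrow> real"
    where "orc\<^sub>0 = measure_pmf.expectation (D_ref d)"
  define Bad where "Bad v = {\<phi>. (\<forall>z. 0 \<le> \<phi> z \<and> \<phi> z \<le> 1) \<and>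
    \<not> \<bar>orc\<^sub>0 \<phi> - measure_pmf.expectation (P v) \<phi>\<bar> \<le> vstat_tolerance n (measure_pmf.expectation (P v) \<phi>)}"
    for v
  define orc where "orc v = (\<lambda>\<phi>. if \<phi> \<in> Bad v then measure_pmf.expectation (P v) \<phi> else orc\<^sub>0 \<phi>)"
    for v
  have "n \<ge> 0"
    using \<open>r > 0\<close> by (simp add: n_def)
  then have valid\<^sub>0: "vstat_valid (D_ref d) n orc\<^sub>0" and valid: "vstat_valid (P v) n (orc v)" for v
    using vstat_valid_expectation vstat_valid_patch[of n "P v" orc\<^sub>0]
    unfolding orc\<^sub>0_def orc_def Bad_def by simp_all
  have few: "real (card {v\<in>V. \<phi> \<in> Bad v}) \<le> 2 * 2 ^ d * exp (- r / 4)" for \<phi>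
  proof (cases "\<forall>z. 0 \<le> \<phi> z \<and> \<phi> z \<le> 1")
    case True
    then show ?thesis
      using card_vstat_invalid[OF \<open>d > 0\<close> \<open>0 \<le> \<alpha>\<close> \<open>\<alpha> \<le> 1\<close> \<open>r > 0\<close> True]
      by (simp add: Bad_def V_def P_def orc\<^sub>0_def n_def)
  next
    case False
    then have "{v\<in>V. \<phi> \<in> Bad v} = {}"
      by (simp add: Bad_def)
    then show ?thesis
      by (simp only: card.empty) simp
  qed
  have "1 / 3 * card V \<le> q * (2 * 2 ^ d * exp (- r / 4))"
  proof (rule sq_distinguishing_count[where Bad = Bad and orc = orc and orc\<^sub>0 = orc\<^sub>0
        and T = "\<lambda>v. {A \<in> space M. sq_run A q (orc v)} \<inter> {A \<in> space M. \<not> sq_run A q orc\<^sub>0}"])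
    show "prob_space M" "finite V"
      by (simp_all add: \<open>prob_space M\<close> V_def finite_PiE)
    show "orc v \<phi> = orc\<^sub>0 \<phi>" if "\<phi> \<notin> Bad v" for v \<phi>
      using that by (simp add: orc_def)
    show "{A \<in> space M. sq_run A q (orc v)} \<inter> {A \<in> space M. \<not> sq_run A q orc\<^sub>0} \<in> sets M \<and>
        1 / 3 \<le> measure M ({A \<in> space M. sq_run A q (orc v)} \<inter> {A \<in> space M. \<not> sq_run A q orc\<^sub>0})"
      if "v \<in> V" for v
    proof (rule solves_B_distinguishing_event[OF \<open>prob_space M\<close> solves[folded n_def] _ valid valid\<^sub>0])
      show "P v \<in> D_family d \<alpha>"
        using that by (auto simp: D_family_def P_def V_def)
    qed
  qed (use few in auto)
  moreover have "card V = 2 ^ d"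
    by (simp add: V_def card_PiE numeral_2_eq_2)
  ultimately have "(2::real) ^ d * (1 / 3) \<le> 2 ^ d * (real q * 2 * exp (- r / 4))"
    by (simp add: algebra_simps)
  then have "1 / 3 \<le> real q * 2 * exp (- r / 4)"
    by (rule mult_left_le_imp_le) simp
  then show ?thesis
    by (simp add: exp_minus field_simps)
qed

theorem lemma3p22:
  shows "\<exists>c>0. \<forall>(d::nat) (\<alpha>::real) (r::real) (q::nat) (M::sq_alg measure).
     d \<ge> 1 \<and> 0 \<le> \<alpha> \<and> \<alpha> \<le> 1 \<and> r > 0 \<and> prob_space M \<and>
     solves_B M q d \<alpha> (real d / (r * \<alpha>\<^sup>2))
     \<longrightarrow> real q \<ge> c * 2 powr (c * r)"
proof (intro exI[of _ "1/6"] conjI allI impI)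
  fix d :: nat and \<alpha> r :: real and q :: nat and M :: "sq_alg measure"
  assume "d \<ge> 1 \<and> 0 \<le> \<alpha> \<and> \<alpha> \<le> 1 \<and> r > 0 \<and> prob_space M \<and>
     solves_B M q d \<alpha> (real d / (r * \<alpha>\<^sup>2))"
  then have "exp (r / 4) / 6 \<le> real q" and "r > 0"
    using solves_B_query_lower_bound[of M q d \<alpha> r] by auto
  have "2 powr (1/6 * r) = exp (1/6 * r * ln 2)"
    by (simp add: powr_def)
  also have "\<dots> \<le> exp (r / 4)"
    using \<open>r > 0\<close> ln_2_less_1 by (simp add: mult_left_le)
  finally show "1/6 * 2 powr (1/6 * r) \<le> real q"
    using \<open>exp (r / 4) / 6 \<le> real q\<close> by simp
qed (simp)

end
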